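(* Let $(a:b:c:d)\in\mathbb{P}^3$ with $a+b=0$, and suppose that $X_{(a:b:c:d)}\subset(\mathbb{P}^1)^4$ has either exactly two singular points or a curve of singular points. Then there exists $(c_0:c_1:c_2:c_3)\in\mathbb{P}^3$ with $c_0^2\neq c_2^2$ and $D_{12}D_{13}D_{14}\neq0$ (i.e. the four lines $L_1,L_2,L_3,L_4$ are pairwise disjoint) such that $(a:b:c:d)=(x^2-y^2:t^2-z^2:z^2+t^2:x^2+y^2)$, where $x=2(c_0c_3-c_1c_2)$, $y=c_0^2-c_1^2-c_2^2+c_3^2$, $z=2(c_0c_1-c_2c_3)$, $t=c_0^2+c_1^2-c_2^2-c_3^2$.
   Context: $(\mathbb{P}^1)^4$ has coordinates $((x_i:y_i))_{i=1}^4$ (here $x_i,y_i$ are the coordinates of $\mathbb{P}^1$, distinct from the auxiliary quantities $x,y,z,t$ in the claim); $X_{(a:b:c:d)}=\{G_{a,b,c,d}=0\}$ with $G_{a,b,c,d}=\tfrac{a+d}{2}(x_1x_2x_3x_4+y_1y_2y_3y_4)+\tfrac{a-d}{2}(x_1x_2y_3y_4+y_1y_2x_3x_4)+\tfrac{b+c}{2}(x_1y_2x_3y_4+y_1x_2y_3x_4)+\tfrac{b-c}{2}(x_1y_2y_3x_4+y_1x_2x_3y_4)$. For $(c_0:c_1:c_2:c_3)\in\mathbb{P}^3$ with $c_0^2\ne c_2^2$, $L_1\subset\mathbb{P}^3_{z_0,\dots,z_3}$ is the line through $(c_0:c_1:c_2:c_3)$ and $(c_2:c_3:c_0:c_1)$,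 $L_2=\tau_1(L_1)$, $L_3=\tau_2(L_2)$, $L_4=\tau_2(L_1)$ with $\tau_1(z_0:z_1:z_2:z_3)=(z_1:z_0:z_3:z_2)$, $\tau_2(z_0:z_1:z_2:z_3)=(z_0:-z_1:z_2:-z_3)$. Set $D_{12}=((c_0+c_1)^2-(c_2+c_3)^2)((c_0-c_1)^2-(c_2-c_3)^2)$, $D_{13}=((c_0-c_2)^2+(c_1-c_3)^2)((c_0+c_2)^2+(c_1+c_3)^2)$, $D_{14}=(c_0^2-c_2^2)(c_1^2-c_3^2)$; the lines $L_1,\dots,L_4$ are pairwise disjoint iff $D_{12}D_{13}D_{14}\neq0$. *)

theory Defs
  imports "HOL-Analysis.Analysis" "HOL-Library.Poly_Mapping"
begin

text \<open>A point of (P^1)^4 is given by a coordinate vector v :: nat => complex, where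
  x_i = v (2*(i-1)) and y_i = v (2*(i-1)+1) for i = 1..4; all other entries are 0.
  Each pair (x_i, y_i) must be nonzero.\<close>

definition valid4 :: "(nat \<Rightarrow> complex) \<Rightarrow> bool" where
  "valid4 v \<longleftrightarrow> (\<forall>k<4. (v (2*k), v (2*k+1)) \<noteq> (0,0)) \<and> (\<forall>i\<ge>8. v i = 0)"

definition pt4 :: "(nat \<Rightarrow> complex) \<Rightarrow> (nat \<Rightarrow> complex) set" where
  "pt4 v = {w. valid4 w \<and> (\<exists>l::nat \<Rightarrow> complex. \<forall>k<4. l k \<noteq> 0 \<and>
                 w (2*k) = l k * v (2*k) \<and> w (2*k+1) = l k * v (2*k+1))}"

definition PP4 :: "(nat \<Rightarrow> complex) set set" where
  "PP4 = pt4 ` {v. valid4 v}"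

text \<open>Polynomials in the 8 variables x_1,y_1,...,x_4,y_4 (variable indices 0..7).\<close>

type_synonym mono8 = "nat \<Rightarrow>\<^sub>0 nat"
type_synonym mpoly8 = "mono8 \<Rightarrow>\<^sub>0 complex"

definition mono_eval :: "mono8 \<Rightarrow> (nat \<Rightarrow> complex) \<Rightarrow> complex" where
  "mono_eval m v = (\<Prod>i\<in>Poly_Mapping.keys m. v i ^ Poly_Mapping.lookup m i)"

definition peval :: "mpoly8 \<Rightarrow> (nat \<Rightarrow> complex) \<Rightarrow> complex" where
  "peval p v = (\<Sum>m\<in>Poly_Mapping.keys p. Poly_Mapping.lookup p m * mono_eval m v)"

definition multihom :: "mpoly8 \<Rightarrow> bool" where
  "multihom p \<longleftrightarrow> (\<forall>m\<in>Poly_Mapping.keys p. \<forall>i\<in>Poly_Mapping.keys m. i < 8) \<and>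
     (\<exists>d::nat \<Rightarrow> nat. \<forall>m\<in>Poly_Mapping.keys p. \<forall>k<4. Poly_Mapping.lookup m (2*k) + Poly_Mapping.lookup m (2*k+1) = d k)"

definition zero_locus :: "mpoly8 set \<Rightarrow> (nat \<Rightarrow> complex) set set" where
  "zero_locus F = {p \<in> PP4. \<exists>v. valid4 v \<and> p = pt4 v \<and> (\<forall>f\<in>F. peval f v = 0)}"

definition zclosed :: "(nat \<Rightarrow> complex) set set \<Rightarrow> bool" where
  "zclosed S \<longleftrightarrow> (\<exists>F. (\<forall>f\<in>F. multihom f) \<and> S = zero_locus F)"

definition zirreducible :: "(nat \<Rightarrow> complex) set set \<Rightarrow> bool" where
  "zirreducible Z \<longleftrightarrow> zclosed Z \<and> Z \<noteq> {} \<and>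
     (\<forall>A B. zclosed A \<longrightarrow> zclosed B \<longrightarrow> Z \<subseteq> A \<union> B \<longrightarrow> Z \<subseteq> A \<or> Z \<subseteq> B)"

definition zdim_ge :: "(nat \<Rightarrow> complex) set set \<Rightarrow> nat \<Rightarrow> bool" where
  "zdim_ge S n \<longleftrightarrow> (\<exists>Z :: nat \<Rightarrow> (nat \<Rightarrow> complex) set set.
      (\<forall>i\<le>n. zirreducible (Z i) \<and> Z i \<subseteq> S) \<and> (\<forall>i<n. Z i \<subset> Z (Suc i)))"

definition is_curve :: "(nat \<Rightarrow> complex) set set \<Rightarrow> bool" where
  "is_curve S \<longleftrightarrow> zclosed S \<and> zdim_ge S 1 \<and> \<not> zdim_ge S 2"

definition Gabcd :: "complex \<Rightarrow> complex \<Rightarrow> complex \<Rightarrow> complex \<Rightarrow> (nat \<Rightarrow> complex) \<Rightarrow> complex" where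
  "Gabcd a b c d v =
     (let x1 = v 0; y1 = v 1; x2 = v 2; y2 = v 3; x3 = v 4; y3 = v 5; x4 = v 6; y4 = v 7 in
       (a + d) / 2 * (x1*x2*x3*x4 + y1*y2*y3*y4)
     + (a - d) / 2 * (x1*x2*y3*y4 + y1*y2*x3*x4)
     + (b + c) / 2 * (x1*y2*x3*y4 + y1*x2*y3*x4)
     + (b - c) / 2 * (x1*y2*y3*x4 + y1*x2*x3*y4))"

definition sing_locus :: "complex \<Rightarrow> complex \<Rightarrow> complex \<Rightarrow> complex \<Rightarrow> (nat \<Rightarrow> complex) set set" where
  "sing_locus a b c d = {p \<in> PP4. \<exists>v. valid4 v \<and> p = pt4 v \<and> Gabcd a b c d v = 0 \<and>
      (\<forall>i<8. deriv (\<lambda>s. Gabcd a b c d (v(i := s))) (v i) = 0)}"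

definition D12 :: "complex \<Rightarrow> complex \<Rightarrow> complex \<Rightarrow> complex \<Rightarrow> complex" where
  "D12 c0 c1 c2 c3 = ((c0 + c1)^2 - (c2 + c3)^2) * ((c0 - c1)^2 - (c2 - c3)^2)"

definition D13 :: "complex \<Rightarrow> complex \<Rightarrow> complex \<Rightarrow> complex \<Rightarrow> complex" where
  "D13 c0 c1 c2 c3 = ((c0 - c2)^2 + (c1 - c3)^2) * ((c0 + c2)^2 + (c1 + c3)^2)"

definition D14 :: "complex \<Rightarrow> complex \<Rightarrow> complex \<Rightarrow> complex \<Rightarrow> complex" where
  "D14 c0 c1 c2 c3 = (c0^2 - c2^2) * (c1^2 - c3^2)"

end

theory Submission
  imports Defs "HOL-Complex_Analysis.Conformal_Mappings"
begin

text \<open>If a \<noteq> 0, c + d \<noteq> 0 and c \<noteq> d, choose square roots X, Y, Z, T of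
  (a+d)/2, (d-a)/2, (c+a)/2, (c-a)/2. Then X^2 - Z^2 = Y^2 - T^2 and Y + T \<noteq> 0, and every such
  quadruple is (x, y, z, t) for some (c0 : c1 : 0 : c3); the identities D12 = t^2 - z^2,
  D13 = x^2 + t^2 and 4 D14 = t^2 - y^2 turn a \<noteq> 0, c + d \<noteq> 0, c \<noteq> d into the disjointness
  of the four lines. This part does not use the hypothesis on the singular locus.

  In the remaining cases that hypothesis fails. With the bilinear forms A, B, C, D in which G
  splits, the partial derivatives at a singular point in the first two factors force
  (a A', b B', c C', d D') = \<alpha> (A, -B, C, -D), and symmetrically for the last two factors.
  For the degenerate parameters this either holds on a whole surface P^1 x P^1, embedded by
  identifying factors, or it forces A = B = 0 or C = D = 0, i.e. all coordinates of a singular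
  point are (1 : 1) or (1 : -1). Such a finite grid contains no irreducible curve, and the
  singular locus contains at least three of its points.\<close>

section \<open>Polynomials and points of (P^1)^4\<close>

lemma all_less_4: "(\<forall>k<(4::nat). P k) \<longleftrightarrow> P 0 \<and> P 1 \<and> P 2 \<and> P 3"
  by (simp add: numeral_eq_Suc All_less_Suc2)

lemma all_less_8: "(\<forall>k<(8::nat). P k) \<longleftrightarrow> P 0 \<and> P 1 \<and> P 2 \<and> P 3 \<and> P 4 \<and> P 5 \<and> P 6 \<and> P 7"
  by (simp add: numeral_eq_Suc All_less_Suc2)

lemma less_8_cases: "k < (8::nat) \<Longrightarrow> k = 0 \<or> k = 1 \<or> k = 2 \<or> k = 3 \<or> k = 4 \<or> k = 5 \<or> k = 6 \<or> k = 7"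
  by (simp add: eval_nat_numeral less_Suc_eq)

lemma peval_eq_sum_superset:
  assumes "finite K" "Poly_Mapping.keys p \<subseteq> K"
  shows "peval p v = (\<Sum>m\<in>K. Poly_Mapping.lookup p m * mono_eval m v)"
  unfolding peval_def
  by (rule sum.mono_neutral_left[OF assms]) (auto simp: in_keys_iff)

lemma mono_eval_eq_prod_superset:
  assumes "finite K" "Poly_Mapping.keys m \<subseteq> K"
  shows "mono_eval m v = (\<Prod>i\<in>K. v i ^ Poly_Mapping.lookup m i)"
  unfolding mono_eval_def
  by (rule prod.mono_neutral_left[OF assms]) (auto simp: in_keys_iff)

lemma peval_add: "peval (p + q) v = peval p v + peval q v"
proof -
  let ?K = "Poly_Mapping.keys p \<union> Poly_Mapping.keys q"
  have "peval (p + q) v = (\<Sum>m\<in>?K. Poly_Mapping.lookup (p + q) m * mono_eval m v)"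
    by (rule peval_eq_sum_superset) (auto simp: keys_add)
  also have "\<dots> = (\<Sum>m\<in>?K. Poly_Mapping.lookup p m * mono_eval m v)
                 + (\<Sum>m\<in>?K. Poly_Mapping.lookup q m * mono_eval m v)"
    by (simp add: lookup_add distrib_right sum.distrib)
  also have "\<dots> = peval p v + peval q v"
    by (simp add: peval_eq_sum_superset[symmetric])
  finally show ?thesis .
qed

lemma peval_single: "peval (Poly_Mapping.single m c) v = c * mono_eval m v"
  by (cases "c = 0") (simp_all add: peval_def)

lemma mono_eval_add: "mono_eval (m1 + m2) v = mono_eval m1 v * mono_eval m2 v"
proof -
  let ?K = "Poly_Mapping.keys m1 \<union> Poly_Mapping.keys m2"
  have "mono_eval (m1 + m2) v = (\<Prod>i\<in>?K. v i ^ Poly_Mapping.lookup (m1 + m2) i)"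
    by (rule mono_eval_eq_prod_superset) (auto simp: keys_add)
  also have "\<dots> = (\<Prod>i\<in>?K. v i ^ Poly_Mapping.lookup m1 i) * (\<Prod>i\<in>?K. v i ^ Poly_Mapping.lookup m2 i)"
    by (simp add: lookup_add power_add prod.distrib)
  also have "\<dots> = mono_eval m1 v * mono_eval m2 v"
    by (simp add: mono_eval_eq_prod_superset[symmetric])
  finally show ?thesis .
qed

lemma mono_eval_single: "mono_eval (Poly_Mapping.single i n) v = v i ^ n"
  by (cases "n = 0") (simp_all add: mono_eval_def)

definition linear_term :: "nat \<Rightarrow> complex \<Rightarrow> mpoly8" where
  "linear_term i c = Poly_Mapping.single (Poly_Mapping.single i 1) c"

definition quadratic_term :: "nat \<Rightarrow> nat \<Rightarrow> complex \<Rightarrow> mpoly8" where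
  "quadratic_term i j c = Poly_Mapping.single (Poly_Mapping.single i 1 + Poly_Mapping.single j 1) c"

lemma peval_linear_term [simp]: "peval (linear_term i c) v = c * v i"
  by (simp add: linear_term_def peval_single mono_eval_single)

lemma peval_quadratic_term [simp]: "peval (quadratic_term i j c) v = c * v i * v j"
  by (simp add: quadratic_term_def peval_single mono_eval_single mono_eval_add)

lemma multihom_two_monomials:
  assumes "\<forall>i \<in> Poly_Mapping.keys m1 \<union> Poly_Mapping.keys m2. i < 8"
    and "\<And>k. Poly_Mapping.lookup m1 (2*k) + Poly_Mapping.lookup m1 (2*k+1)
             = Poly_Mapping.lookup m2 (2*k) + Poly_Mapping.lookup m2 (2*k+1)"
  shows "multihom (Poly_Mapping.single m1 c1 + Poly_Mapping.single m2 c2)"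
proof -
  have "Poly_Mapping.keys (Poly_Mapping.single m1 c1 + Poly_Mapping.single m2 c2) \<subseteq> {m1, m2}"
    using keys_add[of "Poly_Mapping.single m1 c1" "Poly_Mapping.single m2 c2"] by (auto split: if_splits)
  then show ?thesis
    unfolding multihom_def using assms
    by (intro conjI exI[of _ "\<lambda>k. Poly_Mapping.lookup m1 (2*k) + Poly_Mapping.lookup m1 (2*k+1)"]) auto
qed

lemma pair_degree_single:
  "Poly_Mapping.lookup (Poly_Mapping.single (i::nat) (1::nat)) (2*k) + Poly_Mapping.lookup (Poly_Mapping.single i 1) (2*k+1)
     = (if i div 2 = k then 1 else 0)"
  by (auto simp: lookup_single when_def)

lemma keys_single_add_single:
  "Poly_Mapping.keys (Poly_Mapping.single i (1::nat) + Poly_Mapping.single j 1) \<subseteq> {i, j}"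
  using keys_add[of "Poly_Mapping.single i (1::nat)" "Poly_Mapping.single j 1"] by auto

lemma multihom_linear_pair:
  assumes "i < 8" "j < 8" "i div 2 = j div 2"
  shows "multihom (linear_term i c1 + linear_term j c2)"
  unfolding linear_term_def
proof (rule multihom_two_monomials)
  fix k :: nat
  show "Poly_Mapping.lookup (Poly_Mapping.single i 1) (2*k) + Poly_Mapping.lookup (Poly_Mapping.single i 1) (2*k+1)
      = Poly_Mapping.lookup (Poly_Mapping.single j 1) (2*k) + Poly_Mapping.lookup (Poly_Mapping.single j (1::nat)) (2*k+1)"
    unfolding pair_degree_single using assms(3) by simp
qed (use assms in auto)

lemma multihom_linear_term: "i < 8 \<Longrightarrow> multihom (linear_term i c)"
  using multihom_linear_pair[of i i c 0] by (simp add: linear_term_def)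

lemma multihom_quadratic_pair:
  assumes "i < 8" "j < 8" "k < 8" "l < 8"
    and "(k div 2 = i div 2 \<and> l div 2 = j div 2) \<or> (k div 2 = j div 2 \<and> l div 2 = i div 2)"
  shows "multihom (quadratic_term i j c1 + quadratic_term k l c2)"
  unfolding quadratic_term_def
proof (rule multihom_two_monomials)
  fix n :: nat
  show "Poly_Mapping.lookup (Poly_Mapping.single i 1 + Poly_Mapping.single j 1) (2*n)
        + Poly_Mapping.lookup (Poly_Mapping.single i 1 + Poly_Mapping.single j 1) (2*n+1)
      = Poly_Mapping.lookup (Poly_Mapping.single k 1 + Poly_Mapping.single l 1) (2*n)
        + Poly_Mapping.lookup (Poly_Mapping.single k 1 + Poly_Mapping.single l (1::nat)) (2*n+1)"
    unfolding lookup_add using pair_degree_single[of i n] pair_degree_single[of j n]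
      pair_degree_single[of k n] pair_degree_single[of l n] assms(5) by auto
qed (use assms(1-4) keys_single_add_single[of i j] keys_single_add_single[of k l] in auto)

lemma valid4_pair: "valid4 v \<Longrightarrow> k < 4 \<Longrightarrow> (v (2*k), v (2*k+1)) \<noteq> (0, 0)"
  unfolding valid4_def by blast

lemma valid4_in_pt4: "valid4 v \<Longrightarrow> v \<in> pt4 v"
  unfolding pt4_def by (auto intro!: exI[of _ "\<lambda>_. 1"])

lemma pt4_in_PP4: "valid4 v \<Longrightarrow> pt4 v \<in> PP4"
  by (simp add: PP4_def)

lemma pt4_subset_if_rescaled:
  assumes "\<forall>k<4. l k \<noteq> 0 \<and> w (2*k) = l k * v (2*k) \<and> w (2*k+1) = l k * v (2*k+1)"
  shows "pt4 w \<subseteq> pt4 v"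
proof
  fix u assume "u \<in> pt4 w"
  then obtain l' where "valid4 u"
    and "\<forall>k<4. l' k \<noteq> 0 \<and> u (2*k) = l' k * w (2*k) \<and> u (2*k+1) = l' k * w (2*k+1)"
    unfolding pt4_def by auto
  then show "u \<in> pt4 v"
    unfolding pt4_def using assms by (auto intro!: exI[of _ "\<lambda>k. l' k * l k"])
qed

lemma pt4_eq_if_rescaled:
  assumes "\<forall>k<4. l k \<noteq> 0 \<and> w (2*k) = l k * v (2*k) \<and> w (2*k+1) = l k * v (2*k+1)"
  shows "pt4 w = pt4 v"
proof
  show "pt4 w \<subseteq> pt4 v" using assms by (rule pt4_subset_if_rescaled)
  have "\<forall>k<4. inverse (l k) \<noteq> 0 \<and> v (2*k) = inverse (l k) * w (2*k) \<and> v (2*k+1) = inverse (l k) * w (2*k+1)"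
    using assms by (auto simp: field_simps)
  then show "pt4 v \<subseteq> pt4 w" by (rule pt4_subset_if_rescaled)
qed

lemma proportional_pair_rescaled:
  assumes "(v0, v1) \<noteq> (0::complex, 0)" "(w0, w1) \<noteq> (0, 0)" "v0 * w1 = v1 * w0"
  shows "\<exists>l. l \<noteq> 0 \<and> w0 = l * v0 \<and> w1 = l * v1"
proof (cases "v0 = 0")
  case True
  with assms show ?thesis by (auto intro!: exI[of _ "w1 / v1"] simp: field_simps)
next
  case False
  with assms show ?thesis by (auto intro!: exI[of _ "w0 / v0"] simp: field_simps)
qed

lemma pt4_eqI:
  assumes "valid4 v" "valid4 w" "\<forall>k<4. v (2*k) * w (2*k+1) = v (2*k+1) * w (2*k)"
  shows "pt4 w = pt4 v"
proof -
  have "\<exists>l. k < 4 \<longrightarrow> l \<noteq> 0 \<and> w (2*k) = l * v (2*k) \<and> w (2*k+1) = l * v (2*k+1)" for k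
    using proportional_pair_rescaled[OF valid4_pair[OF assms(1)] valid4_pair[OF assms(2)]] assms(3)
    by blast
  then obtain l where "\<forall>k<4. l k \<noteq> 0 \<and> w (2*k) = l k * v (2*k) \<and> w (2*k+1) = l k * v (2*k+1)"
    by metis
  then show ?thesis by (rule pt4_eq_if_rescaled)
qed

lemma pt4_eqD:
  assumes "valid4 v" "pt4 v = pt4 w"
  obtains l where "\<forall>k<4. l k \<noteq> 0 \<and> v (2*k) = l k * w (2*k) \<and> v (2*k+1) = l k * w (2*k+1)"
proof -
  have "v \<in> pt4 w" using valid4_in_pt4[OF assms(1)] assms(2) by simp
  then show ?thesis using that unfolding pt4_def by blast
qed

lemma pt4_neqI:
  assumes "valid4 v" "k < 4" "v (2*k) * w (2*k+1) \<noteq> v (2*k+1) * w (2*k)"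
  shows "pt4 v \<noteq> pt4 w"
proof
  assume "pt4 v = pt4 w"
  then obtain l where "\<forall>k<4. l k \<noteq> 0 \<and> v (2*k) = l k * w (2*k) \<and> v (2*k+1) = l k * w (2*k+1)"
    by (rule pt4_eqD[OF assms(1)])
  then show False using assms(2,3) by (auto simp: algebra_simps)
qed

lemma peval_rescaled:
  assumes "multihom f" "\<forall>i<8. v i = l (i div 2) * w i"
  shows "\<exists>c. peval f v = c * peval f w"
proof -
  obtain d where vars: "\<forall>m\<in>Poly_Mapping.keys f. \<forall>i\<in>Poly_Mapping.keys m. i < 8"
    and deg: "\<forall>m\<in>Poly_Mapping.keys f. \<forall>k<4. Poly_Mapping.lookup m (2*k) + Poly_Mapping.lookup m (2*k+1) = d k"
    using assms(1) unfolding multihom_def by blast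
  let ?c = "\<Prod>k<4. l k ^ d k"
  have "mono_eval m v = ?c * mono_eval m w" if m: "m \<in> Poly_Mapping.keys f" for m
  proof -
    have keys: "Poly_Mapping.keys m \<subseteq> {..<8}" using vars m by auto
    have "mono_eval m v = (\<Prod>i<8. l (i div 2) ^ Poly_Mapping.lookup m i) * (\<Prod>i<8. w i ^ Poly_Mapping.lookup m i)"
      using assms(2) by (simp add: mono_eval_eq_prod_superset[OF _ keys] power_mult_distrib prod.distrib[symmetric])
    also have "(\<Prod>i<8. l (i div 2) ^ Poly_Mapping.lookup m i) = ?c"
    proof -
      have p8: "(\<Prod>i<8. g i) = g 0 * g 1 * g 2 * g 3 * g 4 * g 5 * g 6 * g 7" for g :: "nat \<Rightarrow> complex"
        by (simp add: eval_nat_numeral)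
      have p4: "(\<Prod>k<4. g k) = g 0 * g 1 * g 2 * g 3" for g :: "nat \<Rightarrow> complex"
        by (simp add: eval_nat_numeral)
      have "Poly_Mapping.lookup m 0 + Poly_Mapping.lookup m 1 = d 0"
        "Poly_Mapping.lookup m 2 + Poly_Mapping.lookup m 3 = d 1"
        "Poly_Mapping.lookup m 4 + Poly_Mapping.lookup m 5 = d 2"
        "Poly_Mapping.lookup m 6 + Poly_Mapping.lookup m 7 = d 3"
        using deg m unfolding all_less_4 by simp_all
      then show ?thesis unfolding p8 p4 by (auto simp: power_add[symmetric] mult_ac)
    qed
    finally show ?thesis by (simp add: mono_eval_eq_prod_superset[OF _ keys])
  qed
  then have "peval f v = ?c * peval f w"
    unfolding peval_def by (simp add: sum_distrib_right mult_ac)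
  then show ?thesis by blast
qed

lemma peval_eq_0_if_pt4_eq:
  assumes "multihom f" "valid4 v" "pt4 v = pt4 w" "peval f w = 0"
  shows "peval f v = 0"
proof -
  obtain l where l: "\<forall>k<4. l k \<noteq> 0 \<and> v (2*k) = l k * w (2*k) \<and> v (2*k+1) = l k * w (2*k+1)"
    using assms(2,3) by (rule pt4_eqD)
  have "v i = l (i div 2) * w i" if "i < 8" for i
  proof -
    have "i = 2 * (i div 2) \<or> i = 2 * (i div 2) + 1" by presburger
    moreover have "i div 2 < 4" using that by simp
    ultimately show ?thesis using l by metis
  qed
  then obtain c where "peval f v = c * peval f w" using peval_rescaled[OF assms(1)] by blast
  then show ?thesis using assms(4) by simp
qed

lemma pt4_in_zero_locus_iff:
  assumes "\<forall>f\<in>F. multihom f" "valid4 u"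
  shows "pt4 u \<in> zero_locus F \<longleftrightarrow> (\<forall>f\<in>F. peval f u = 0)"
proof
  assume "pt4 u \<in> zero_locus F"
  then obtain v where "valid4 v" "pt4 u = pt4 v" "\<forall>f\<in>F. peval f v = 0"
    unfolding zero_locus_def by blast
  then show "\<forall>f\<in>F. peval f u = 0"
    using peval_eq_0_if_pt4_eq assms by blast
qed (use assms(2) pt4_in_PP4 in \<open>auto simp: zero_locus_def\<close>)

lemma zero_locus_memE:
  assumes "p \<in> zero_locus F"
  obtains u where "valid4 u" "p = pt4 u" "\<forall>f\<in>F. peval f u = 0"
  using assms unfolding zero_locus_def by blast

lemma zclosedE:
  assumes "zclosed Z"
  obtains F where "\<forall>f\<in>F. multihom f" "Z = zero_locus F"
  using assms unfolding zclosed_def by blast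

lemma zclosed_zero_locus: "\<forall>f\<in>F. multihom f \<Longrightarrow> zclosed (zero_locus F)"
  unfolding zclosed_def by blast

section \<open>Irreducible closed sets and dimension\<close>

lemma entire_vanishes_if_product_vanishes_cofinite:
  fixes f g :: "complex \<Rightarrow> complex"
  assumes "f holomorphic_on UNIV" "g holomorphic_on UNIV" "finite E"
    and "\<And>s. s \<notin> E \<Longrightarrow> f s = 0 \<or> g s = 0" and "f z \<noteq> 0"
  shows "g w = 0"
proof -
  have "continuous (at z) f"
    using assms(1) holomorphic_on_imp_continuous_on continuous_on_eq_continuous_at open_UNIV by blast
  then obtain e where e: "e > 0" "\<And>y. dist z y < e \<Longrightarrow> f y \<noteq> 0"
    using continuous_at_avoid[of z f 0] assms(5) by metis
  define U where "U = ball z e - E"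
  have "z islimpt ball z e" using e(1) by (simp add: islimpt_ball)
  then have "z islimpt E \<union> U" by (rule islimpt_subset) (auto simp: U_def)
  then have "z islimpt U" using islimpt_Un_finite[OF assms(3)] by blast
  moreover have "g s = 0" if "s \<in> U" for s
    using that assms(4) e(2) unfolding U_def by (auto simp: dist_commute)
  ultimately show ?thesis
    using analytic_continuation[OF assms(2) open_UNIV connected_UNIV, of U z] by blast
qed

lemma holomorphic_peval_on_line: "(\<lambda>s. peval f (\<lambda>i. P i + s * (Q i - P i))) holomorphic_on UNIV"
  unfolding peval_def mono_eval_def by (intro holomorphic_intros)

lemma finite_common_roots_pair:
  assumes "(p0, p1) \<noteq> (0::complex, 0)"
  shows "finite {s. p0 + s * q0 = 0 \<and> p1 + s * q1 = 0}"
proof (cases "p0 = 0")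
  case True
  then have "{s. p0 + s * q0 = 0 \<and> p1 + s * q1 = 0} \<subseteq> {- p1 / q1}"
    using assms by (cases "q1 = 0") (auto simp: field_simps eq_neg_iff_add_eq_0)
  then show ?thesis by (rule finite_subset) simp
next
  case False
  then have "{s. p0 + s * q0 = 0 \<and> p1 + s * q1 = 0} \<subseteq> {- p0 / q0}"
    by (cases "q0 = 0") (auto simp: field_simps eq_neg_iff_add_eq_0)
  then show ?thesis by (rule finite_subset) simp
qed

lemma finite_invalid_on_line:
  assumes "valid4 P" "valid4 Q"
  shows "finite {s. \<not> valid4 (\<lambda>i. P i + s * (Q i - P i))}"
proof (rule finite_subset)
  show "{s. \<not> valid4 (\<lambda>i. P i + s * (Q i - P i))} \<subseteq>
      (\<Union>k<4. {s. P (2*k) + s * (Q (2*k) - P (2*k)) = 0 \<and> P (2*k+1) + s * (Q (2*k+1) - P (2*k+1)) = 0})"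
    using assms unfolding valid4_def by auto
  show "finite (\<Union>k<4. {s. P (2*k) + s * (Q (2*k) - P (2*k)) = 0 \<and> P (2*k+1) + s * (Q (2*k+1) - P (2*k+1)) = 0})"
    using finite_common_roots_pair[OF valid4_pair[OF assms(1)]] by blast
qed

text \<open>Restricted to the line through two points of the family, the polynomials defining two closed
  sets that cover it become entire functions whose product vanishes off finitely many points; so
  one of them vanishes identically.\<close>

lemma zirreducible_affine_family:
  assumes W: "W \<subseteq> {v. valid4 v}" "W \<noteq> {}" "zclosed (pt4 ` W)"
    and affine: "\<And>P Q s. P \<in> W \<Longrightarrow> Q \<in> W \<Longrightarrow> valid4 (\<lambda>i. P i + s * (Q i - P i))
                   \<Longrightarrow> (\<lambda>i. P i + s * (Q i - P i)) \<in> W"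
  shows "zirreducible (pt4 ` W)"
proof -
  have "pt4 ` W \<subseteq> A \<or> pt4 ` W \<subseteq> B" if "zclosed A" "zclosed B" and cover: "pt4 ` W \<subseteq> A \<union> B" for A B
  proof -
  from that obtain FA FB where FA: "\<forall>f\<in>FA. multihom f" "A = zero_locus FA"
    and FB: "\<forall>f\<in>FB. multihom f" "B = zero_locus FB"
    by (metis zclosedE)
  show "pt4 ` W \<subseteq> A \<or> pt4 ` W \<subseteq> B"
  proof (rule ccontr)
    assume "\<not> ?thesis"
    then obtain P Q where P: "P \<in> W" "pt4 P \<notin> A" and Q: "Q \<in> W" "pt4 Q \<notin> B" by blast
    have vP: "valid4 P" and vQ: "valid4 Q" using P(1) Q(1) W(1) by auto
    obtain f where f: "f \<in> FA" "peval f P \<noteq> 0" using P(2) FA pt4_in_zero_locus_iff[OF FA(1) vP] by auto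
    obtain g where g: "g \<in> FB" "peval g Q \<noteq> 0" using Q(2) FB pt4_in_zero_locus_iff[OF FB(1) vQ] by auto
    define L where "L s = (\<lambda>i. P i + s * (Q i - P i))" for s
    have "peval g (L 1) = 0"
    proof (rule entire_vanishes_if_product_vanishes_cofinite[where f="\<lambda>s. peval f (L s)"
          and g="\<lambda>s. peval g (L s)" and E="{s. \<not> valid4 (L s)}" and z=0])
      show "(\<lambda>s. peval f (L s)) holomorphic_on UNIV" "(\<lambda>s. peval g (L s)) holomorphic_on UNIV"
        unfolding L_def by (rule holomorphic_peval_on_line)+
      show "finite {s. \<not> valid4 (L s)}" unfolding L_def by (rule finite_invalid_on_line[OF vP vQ])
      show "peval f (L s) = 0 \<or> peval g (L s) = 0" if "s \<notin> {s. \<not> valid4 (L s)}" for s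
      proof -
        have vL: "valid4 (L s)" using that by simp
        then have "pt4 (L s) \<in> A \<union> B" using affine[OF P(1) Q(1)] cover unfolding L_def by blast
        then show ?thesis using FA FB f(1) g(1) pt4_in_zero_locus_iff[OF _ vL] by blast
      qed
      show "peval f (L 0) \<noteq> 0" using f(2) by (simp add: L_def)
    qed
    then show False using g(2) by (simp add: L_def)
  qed
  qed
  then show ?thesis using W(2,3) unfolding zirreducible_def by blast
qed

lemma zdim_ge_2I:
  assumes "zirreducible A" "zirreducible B" "zirreducible C" "A \<subset> B" "B \<subset> C" "C \<subseteq> S"
  shows "zdim_ge S 2"
  unfolding zdim_ge_def using assms
  by (intro exI[of _ "\<lambda>i. if i = 0 then A else if i = 1 then B else C"])
     (auto simp: numeral_2_eq_2 le_Suc_eq less_Suc_eq)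

lemma card_ne_2_if_three_points:
  assumes "p1 \<in> S" "p2 \<in> S" "p3 \<in> S" "p1 \<noteq> p2" "p1 \<noteq> p3" "p2 \<noteq> p3"
  shows "card S \<noteq> 2"
proof (cases "finite S")
  case True
  then have "card {p1, p2, p3} \<le> card S" using assms(1-3) by (intro card_mono) auto
  then show ?thesis using assms(4-6) by auto
qed simp

lemma card_ne_2_if_zdim_ge_2:
  assumes "zdim_ge S 2"
  shows "card S \<noteq> 2"
proof -
  obtain Z where Z: "\<forall>i\<le>2. zirreducible (Z i) \<and> Z i \<subseteq> S" "\<forall>i<2. Z i \<subset> Z (Suc i)"
    using assms unfolding zdim_ge_def by blast
  then have "Z 0 \<noteq> {}" "Z 0 \<subset> Z 1" "Z 1 \<subset> Z 2" "Z 2 \<subseteq> S"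
    by (auto simp: zirreducible_def numeral_2_eq_2)
  then obtain p0 p1 p2 where "p0 \<in> Z 0" "p1 \<in> Z 1 - Z 0" "p2 \<in> Z 2 - Z 1" by blast
  then show ?thesis using \<open>Z 0 \<subset> Z 1\<close> \<open>Z 1 \<subset> Z 2\<close> \<open>Z 2 \<subseteq> S\<close>
    by (intro card_ne_2_if_three_points[of p0 S p1 p2]) auto
qed

definition sign_grid :: "(nat \<Rightarrow> complex) set set" where
  "sign_grid = {pt4 v | v. valid4 v \<and> (\<forall>k<4. v (2*k+1) = v (2*k) \<or> v (2*k+1) = - v (2*k))}"

text \<open>Two points of the grid differ in the sign of some pair k; the hyperplanes
  y_k = x_k and y_k = - x_k then split an irreducible set containing both.\<close>

lemma zirreducible_subset_sign_grid_eq: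
  assumes irr: "zirreducible Z" and grid: "Z \<subseteq> sign_grid" and "p \<in> Z" "q \<in> Z"
  shows "p = q"
proof (rule ccontr)
  assume "p \<noteq> q"
  obtain v where v: "valid4 v" "p = pt4 v" "\<forall>k<4. v (2*k+1) = v (2*k) \<or> v (2*k+1) = - v (2*k)"
    using assms(3) grid unfolding sign_grid_def by blast
  obtain w where w: "valid4 w" "q = pt4 w" "\<forall>k<4. w (2*k+1) = w (2*k) \<or> w (2*k+1) = - w (2*k)"
    using assms(4) grid unfolding sign_grid_def by blast
  obtain k where k: "k < 4" "v (2*k) * w (2*k+1) \<noteq> v (2*k+1) * w (2*k)"
    using pt4_eqI[OF v(1) w(1)] \<open>p \<noteq> q\<close> v(2) w(2) by metis
  obtain \<sigma> :: complex where \<sigma>: "\<sigma> = 1 \<or> \<sigma> = -1" "v (2*k+1) = \<sigma> * v (2*k)" "w (2*k+1) = - \<sigma> * w (2*k)"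
  proof -
    have "v (2*k+1) = v (2*k) \<or> v (2*k+1) = - v (2*k)" "w (2*k+1) = w (2*k) \<or> w (2*k+1) = - w (2*k)"
      using v(3) w(3) k(1) by blast+
    then have "(v (2*k+1) = v (2*k) \<and> w (2*k+1) = - w (2*k)) \<or> (v (2*k+1) = - v (2*k) \<and> w (2*k+1) = w (2*k))"
      using k(2) by (auto simp: algebra_simps)
    then show ?thesis using that[of 1] that[of "-1"] by auto
  qed
  have "v (2*k) \<noteq> 0" "w (2*k) \<noteq> 0" using valid4_pair[OF v(1) k(1)] valid4_pair[OF w(1) k(1)] \<sigma> by auto
  define sign_eq where "sign_eq s = linear_term (2*k) (- s) + linear_term (2*k+1) 1" for s
  have peval_sign_eq: "peval (sign_eq s) u = u (2*k+1) - s * u (2*k)" for s u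
    by (simp add: sign_eq_def peval_add)
  have multihom_sign_eq: "\<forall>f\<in>{sign_eq s}. multihom f" for s
    using k(1) by (simp add: sign_eq_def multihom_linear_pair)
  have "Z \<subseteq> zero_locus {sign_eq \<sigma>} \<union> zero_locus {sign_eq (- \<sigma>)}"
  proof
    fix r assume "r \<in> Z"
    then obtain u where u: "valid4 u" "r = pt4 u" "u (2*k+1) = u (2*k) \<or> u (2*k+1) = - u (2*k)"
      using grid k(1) unfolding sign_grid_def by blast
    then have "peval (sign_eq \<sigma>) u = 0 \<or> peval (sign_eq (- \<sigma>)) u = 0"
      using \<sigma>(1) by (auto simp: peval_sign_eq)
    then show "r \<in> zero_locus {sign_eq \<sigma>} \<union> zero_locus {sign_eq (- \<sigma>)}"
      using pt4_in_zero_locus_iff[OF multihom_sign_eq u(1)] u(2) by auto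
  qed
  then have "Z \<subseteq> zero_locus {sign_eq \<sigma>} \<or> Z \<subseteq> zero_locus {sign_eq (- \<sigma>)}"
    using irr zclosed_zero_locus[OF multihom_sign_eq] unfolding zirreducible_def by blast
  moreover have "q \<notin> zero_locus {sign_eq \<sigma>}" "p \<notin> zero_locus {sign_eq (- \<sigma>)}"
    using pt4_in_zero_locus_iff[OF multihom_sign_eq w(1)] pt4_in_zero_locus_iff[OF multihom_sign_eq v(1)]
      v(2) w(2) \<sigma> \<open>v (2*k) \<noteq> 0\<close> \<open>w (2*k) \<noteq> 0\<close> by (auto simp: peval_sign_eq)
  ultimately show False using assms(3,4) by blast
qed

lemma not_zdim_ge_1_if_subset_sign_grid:
  assumes "S \<subseteq> sign_grid"
  shows "\<not> zdim_ge S 1"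
proof
  assume "zdim_ge S 1"
  then obtain Z where "\<forall>i\<le>1. zirreducible (Z i) \<and> Z i \<subseteq> S" "\<forall>i<1. Z i \<subset> Z (Suc i)"
    unfolding zdim_ge_def by blast
  then have Z: "zirreducible (Z 0)" "zirreducible (Z 1)" "Z 1 \<subseteq> S" "Z 0 \<subset> Z 1" by auto
  obtain p where "p \<in> Z 0" using Z(1) unfolding zirreducible_def by blast
  moreover obtain q where "q \<in> Z 1" "q \<notin> Z 0" using Z(4) by blast
  ultimately show False
    using zirreducible_subset_sign_grid_eq[OF Z(2), of p q] Z(3,4) assms by blast
qed

section \<open>Linear families of points\<close>

text \<open>An admissible map \<tau> sends each coordinate pair bijectively onto a pair and is idempotent, so
  the equations v j = v (\<tau> j) identify every factor of (P^1)^4 with a factor fixed by \<tau>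
  (possibly exchanging x and y). The resulting families are products of copies of P^1, embedded
  linearly; the coordinates in Z, which \<tau> fixes, are additionally required to vanish.\<close>

definition admissible :: "(nat \<Rightarrow> nat) \<Rightarrow> nat set \<Rightarrow> bool" where
  "admissible \<tau> Z \<longleftrightarrow> (\<forall>j<8. \<tau> j < 8) \<and> (\<forall>k<4. \<tau> (2*k) div 2 = \<tau> (2*k+1) div 2 \<and> \<tau> (2*k) \<noteq> \<tau> (2*k+1))
     \<and> (\<forall>j<8. \<tau> (\<tau> j) = \<tau> j) \<and> (\<forall>i\<in>Z. i < 8 \<and> \<tau> i = i)"

definition coord_subspace :: "(nat \<Rightarrow> nat) \<Rightarrow> nat set \<Rightarrow> (nat \<Rightarrow> complex) set" where
  "coord_subspace \<tau> Z = {v. valid4 v \<and> (\<forall>j<8. v j = v (\<tau> j)) \<and> (\<forall>i\<in>Z. v i = 0)}"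

definition coord_equations :: "(nat \<Rightarrow> nat) \<Rightarrow> nat set \<Rightarrow> mpoly8 set" where
  "coord_equations \<tau> Z =
     {quadratic_term (2*k) (\<tau> (2*k+1)) 1 + quadratic_term (2*k+1) (\<tau> (2*k)) (-1) | k. k < 4}
     \<union> {linear_term i 1 | i. i \<in> Z}"

definition reindex :: "(nat \<Rightarrow> nat) \<Rightarrow> (nat \<Rightarrow> complex) \<Rightarrow> nat \<Rightarrow> complex" where
  "reindex \<tau> v j = (if j < 8 then v (\<tau> j) else 0)"

lemma admissible_subset: "admissible \<tau> Z \<Longrightarrow> Z' \<subseteq> Z \<Longrightarrow> admissible \<tau> Z'"
  unfolding admissible_def by blast

lemma coord_subspace_antimono: "Z' \<subseteq> Z \<Longrightarrow> coord_subspace \<tau> Z \<subseteq> coord_subspace \<tau> Z'"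
  unfolding coord_subspace_def by auto

lemma reindex_in_coord_subspace:
  assumes adm: "admissible \<tau> Z" and v: "valid4 v" "\<forall>i\<in>Z. v i = 0"
  shows "reindex \<tau> v \<in> coord_subspace \<tau> Z"
proof -
  have "(reindex \<tau> v (2*k), reindex \<tau> v (2*k+1)) \<noteq> (0, 0)" if k: "k < 4" for k
  proof -
    define m where "m = \<tau> (2*k) div 2"
    have "\<tau> (2*k) < 8" "\<tau> (2*k+1) div 2 = m" "\<tau> (2*k) \<noteq> \<tau> (2*k+1)"
      using adm k unfolding admissible_def m_def by auto
    then have "m < 4" "(\<tau> (2*k) = 2*m \<and> \<tau> (2*k+1) = 2*m+1) \<or> (\<tau> (2*k) = 2*m+1 \<and> \<tau> (2*k+1) = 2*m)"
      unfolding m_def by presburger+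
    then show ?thesis using valid4_pair[OF v(1), of m] k by (auto simp: reindex_def)
  qed
  then have "valid4 (reindex \<tau> v)" unfolding valid4_def by (auto simp: reindex_def)
  then show ?thesis
    using adm v(2) unfolding coord_subspace_def admissible_def by (auto simp: reindex_def)
qed

lemma multihom_coord_equations:
  assumes "admissible \<tau> Z"
  shows "\<forall>f\<in>coord_equations \<tau> Z. multihom f"
proof -
  have "multihom (quadratic_term (2*k) (\<tau> (2*k+1)) 1 + quadratic_term (2*k+1) (\<tau> (2*k)) (-1))"
    if k: "k < 4" for k
  proof (rule multihom_quadratic_pair)
    have "2*k < 8" "2*k+1 < 8" using k by simp_all
    then show "2*k < 8" "\<tau> (2*k+1) < 8" "2*k+1 < 8" "\<tau> (2*k) < 8"
      using assms unfolding admissible_def by blast+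
    show "((2*k+1) div 2 = 2*k div 2 \<and> \<tau> (2*k) div 2 = \<tau> (2*k+1) div 2)
        \<or> ((2*k+1) div 2 = \<tau> (2*k+1) div 2 \<and> \<tau> (2*k) div 2 = 2*k div 2)"
      using assms k unfolding admissible_def by simp
  qed
  moreover have "multihom (linear_term i 1)" if "i \<in> Z" for i
    using assms that unfolding admissible_def by (blast intro: multihom_linear_term)
  ultimately show ?thesis unfolding coord_equations_def by blast
qed

lemma coord_equations_vanish_iff:
  "(\<forall>f\<in>coord_equations \<tau> Z. peval f v = 0) \<longleftrightarrow>
     (\<forall>k<4. v (2*k) * v (\<tau> (2*k+1)) = v (2*k+1) * v (\<tau> (2*k))) \<and> (\<forall>i\<in>Z. v i = 0)"
proof -
  have "(\<forall>f\<in>coord_equations \<tau> Z. peval f v = 0) \<longleftrightarrow>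
      (\<forall>k<4. peval (quadratic_term (2*k) (\<tau> (2*k+1)) 1 + quadratic_term (2*k+1) (\<tau> (2*k)) (-1)) v = 0)
      \<and> (\<forall>i\<in>Z. peval (linear_term i 1) v = 0)"
    unfolding coord_equations_def by blast
  then show ?thesis by (simp add: peval_add)
qed

lemma coord_subspace_eq_zero_locus:
  assumes adm: "admissible \<tau> Z"
  shows "pt4 ` coord_subspace \<tau> Z = zero_locus (coord_equations \<tau> Z)"
proof
  show "pt4 ` coord_subspace \<tau> Z \<subseteq> zero_locus (coord_equations \<tau> Z)"
  proof
    fix p assume "p \<in> pt4 ` coord_subspace \<tau> Z"
    then obtain w where w: "valid4 w" "\<forall>j<8. w j = w (\<tau> j)" "\<forall>i\<in>Z. w i = 0" "p = pt4 w"
      unfolding coord_subspace_def by blast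
    have "w (2*k) * w (\<tau> (2*k+1)) = w (2*k+1) * w (\<tau> (2*k))" if "k < 4" for k
    proof -
      have "w (2*k) = w (\<tau> (2*k))" "w (2*k+1) = w (\<tau> (2*k+1))" using w(2) that by auto
      then show ?thesis by (simp add: mult.commute)
    qed
    then show "p \<in> zero_locus (coord_equations \<tau> Z)"
      using pt4_in_zero_locus_iff[OF multihom_coord_equations[OF adm] w(1)] coord_equations_vanish_iff w(3,4)
      by blast
  qed
  show "zero_locus (coord_equations \<tau> Z) \<subseteq> pt4 ` coord_subspace \<tau> Z"
  proof
    fix p assume "p \<in> zero_locus (coord_equations \<tau> Z)"
    then obtain v where v: "valid4 v" "p = pt4 v" "\<forall>k<4. v (2*k) * v (\<tau> (2*k+1)) = v (2*k+1) * v (\<tau> (2*k))"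
      and vZ: "\<forall>i\<in>Z. v i = 0"
      by (auto elim!: zero_locus_memE simp: coord_equations_vanish_iff)
    have "reindex \<tau> v \<in> coord_subspace \<tau> Z" by (rule reindex_in_coord_subspace[OF adm v(1) vZ])
    moreover from this have "pt4 (reindex \<tau> v) = pt4 v"
      using v(3) by (intro pt4_eqI[OF v(1)]) (auto simp: reindex_def coord_subspace_def)
    ultimately show "p \<in> pt4 ` coord_subspace \<tau> Z" using v(2) by (metis image_eqI)
  qed
qed

lemma zirreducible_coord_subspace:
  assumes "admissible \<tau> Z" "coord_subspace \<tau> Z \<noteq> {}"
  shows "zirreducible (pt4 ` coord_subspace \<tau> Z)"
proof (rule zirreducible_affine_family)
  show "zclosed (pt4 ` coord_subspace \<tau> Z)"
    unfolding coord_subspace_eq_zero_locus[OF assms(1)]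
    by (rule zclosed_zero_locus[OF multihom_coord_equations[OF assms(1)]])
qed (use assms(2) in \<open>auto simp: coord_subspace_def\<close>)

lemma pt4_notin_coord_subspace:
  assumes "admissible \<tau> Z" "valid4 w" "i \<in> Z" "w i \<noteq> 0"
  shows "pt4 w \<notin> pt4 ` coord_subspace \<tau> Z"
  using assms pt4_in_zero_locus_iff[OF multihom_coord_equations[OF assms(1)] assms(2)]
  by (auto simp: coord_subspace_eq_zero_locus coord_equations_vanish_iff)

text \<open>Requiring v 1 = 0, and then also v k = 0, cuts a line and then a point out of the surface,
  which gives a chain point \<subset> line \<subset> surface of irreducible closed sets.\<close>

lemma zdim_ge_2_if_contains_coord_surface:
  assumes adm: "admissible \<tau> {1, k}" and k: "odd k" "k \<noteq> 1"
    and surface: "pt4 ` coord_subspace \<tau> {} \<subseteq> S"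
  shows "zdim_ge S 2"
proof -
  have adm1: "admissible \<tau> {1}" and adm0: "admissible \<tau> {}"
    using adm admissible_subset by blast+
  have fixed: "k < 8" "\<tau> k = k" "\<tau> 1 = 1" using adm unfolding admissible_def by auto
  define u0 :: "nat \<Rightarrow> complex" where "u0 i = (if i < 8 \<and> even i then 1 else 0)" for i
  define u1 where "u1 = u0(k := 1)"
  define u2 :: "nat \<Rightarrow> complex" where "u2 i = (if i < 8 then 1 else 0)" for i
  have "valid4 u0" "valid4 u2" unfolding valid4_def u0_def u2_def by auto
  moreover have "valid4 u1" using fixed(1) unfolding valid4_def u1_def u0_def by auto
  ultimately have W: "reindex \<tau> u0 \<in> coord_subspace \<tau> {1, k}" "reindex \<tau> u1 \<in> coord_subspace \<tau> {1}"
    "reindex \<tau> u2 \<in> coord_subspace \<tau> {}"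
    using reindex_in_coord_subspace[OF adm] reindex_in_coord_subspace[OF adm1]
      reindex_in_coord_subspace[OF adm0] k by (auto simp: u0_def u1_def)
  have "reindex \<tau> u1 k \<noteq> 0" "reindex \<tau> u2 1 \<noteq> 0"
    using fixed by (simp_all add: reindex_def u1_def u2_def)
  then have new: "pt4 (reindex \<tau> u1) \<notin> pt4 ` coord_subspace \<tau> {1, k}"
    "pt4 (reindex \<tau> u2) \<notin> pt4 ` coord_subspace \<tau> {1}"
    using pt4_notin_coord_subspace[OF adm] pt4_notin_coord_subspace[OF adm1] W(2,3)
    by (auto simp: coord_subspace_def)
  have sub: "pt4 ` coord_subspace \<tau> {1, k} \<subseteq> pt4 ` coord_subspace \<tau> {1}"
    "pt4 ` coord_subspace \<tau> {1} \<subseteq> pt4 ` coord_subspace \<tau> {}"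
    by (simp_all add: coord_subspace_antimono image_mono)
  show ?thesis
  proof (rule zdim_ge_2I[OF _ _ _ _ _ surface])
    show "zirreducible (pt4 ` coord_subspace \<tau> {1, k})" "zirreducible (pt4 ` coord_subspace \<tau> {1})"
      "zirreducible (pt4 ` coord_subspace \<tau> {})"
      using zirreducible_coord_subspace[OF adm] zirreducible_coord_subspace[OF adm1]
        zirreducible_coord_subspace[OF adm0] W by blast+
    show "pt4 ` coord_subspace \<tau> {1, k} \<subset> pt4 ` coord_subspace \<tau> {1}"
      using sub(1) new(1) W(2) by blast
    show "pt4 ` coord_subspace \<tau> {1} \<subset> pt4 ` coord_subspace \<tau> {}"
      using sub(2) new(2) W(3) by blast
  qed
qed

section \<open>Singular points of X_(a:b:c:d)\<close>

text \<open>dG a b c d v i is the partial derivative of G in the coordinate v i.\<close>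

definition dG :: "complex \<Rightarrow> complex \<Rightarrow> complex \<Rightarrow> complex \<Rightarrow> (nat \<Rightarrow> complex) \<Rightarrow> nat \<Rightarrow> complex" where
  "dG a b c d v i =
     (let x1 = v 0; y1 = v 1; x2 = v 2; y2 = v 3; x3 = v 4; y3 = v 5; x4 = v 6; y4 = v 7 in
      if i = 0 then (a+d)/2*x2*x3*x4 + (a-d)/2*x2*y3*y4 + (b+c)/2*y2*x3*y4 + (b-c)/2*y2*y3*x4
      else if i = 1 then (a+d)/2*y2*y3*y4 + (a-d)/2*y2*x3*x4 + (b+c)/2*x2*y3*x4 + (b-c)/2*x2*x3*y4
      else if i = 2 then (a+d)/2*x1*x3*x4 + (a-d)/2*x1*y3*y4 + (b+c)/2*y1*y3*x4 + (b-c)/2*y1*x3*y4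
      else if i = 3 then (a+d)/2*y1*y3*y4 + (a-d)/2*y1*x3*x4 + (b+c)/2*x1*x3*y4 + (b-c)/2*x1*y3*x4
      else if i = 4 then (a+d)/2*x1*x2*x4 + (a-d)/2*y1*y2*x4 + (b+c)/2*x1*y2*y4 + (b-c)/2*y1*x2*y4
      else if i = 5 then (a+d)/2*y1*y2*y4 + (a-d)/2*x1*x2*y4 + (b+c)/2*y1*x2*x4 + (b-c)/2*x1*y2*x4
      else if i = 6 then (a+d)/2*x1*x2*x3 + (a-d)/2*y1*y2*x3 + (b+c)/2*y1*x2*y3 + (b-c)/2*x1*y2*y3
      else (a+d)/2*y1*y2*y3 + (a-d)/2*x1*x2*y3 + (b+c)/2*x1*y2*x3 + (b-c)/2*y1*x2*x3)"

lemma Gabcd_affine: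
  assumes "i < 8"
  shows "(\<lambda>s. Gabcd a b c d (v(i := s))) = (\<lambda>s. Gabcd a b c d (v(i := 0)) + s * dG a b c d v i)"
  using less_8_cases[OF assms] by (elim disjE) (simp_all add: Gabcd_def dG_def Let_def algebra_simps)

lemma deriv_Gabcd:
  assumes "i < 8"
  shows "deriv (\<lambda>s. Gabcd a b c d (v(i := s))) x = dG a b c d v i"
  unfolding Gabcd_affine[OF assms] by (rule DERIV_imp_deriv) (auto intro!: derivative_eq_intros)

lemma sing_locus_iff:
  "p \<in> sing_locus a b c d \<longleftrightarrow>
     (\<exists>v. valid4 v \<and> p = pt4 v \<and> Gabcd a b c d v = 0 \<and> (\<forall>i<8. dG a b c d v i = 0))"
  unfolding sing_locus_def using pt4_in_PP4 by (auto simp: deriv_Gabcd)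

lemma pt4_in_sing_locusI:
  "valid4 v \<Longrightarrow> Gabcd a b c d v = 0 \<Longrightarrow> \<forall>i<8. dG a b c d v i = 0 \<Longrightarrow> pt4 v \<in> sing_locus a b c d"
  by (auto simp: sing_locus_iff)

text \<open>In terms of these bilinear forms in two coordinate pairs,
  2 G = a qA(1,2) qA(3,4) + b qB(1,2) qB(3,4) + c qC(1,2) qC(3,4) + d qD(1,2) qD(3,4).\<close>

definition qA :: "complex \<Rightarrow> complex \<Rightarrow> complex \<Rightarrow> complex \<Rightarrow> complex" where
  "qA x1 y1 x2 y2 = x1*x2 + y1*y2"
definition qB :: "complex \<Rightarrow> complex \<Rightarrow> complex \<Rightarrow> complex \<Rightarrow> complex" where
  "qB x1 y1 x2 y2 = x1*y2 + y1*x2"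
definition qC :: "complex \<Rightarrow> complex \<Rightarrow> complex \<Rightarrow> complex \<Rightarrow> complex" where
  "qC x1 y1 x2 y2 = x1*y2 - y1*x2"
definition qD :: "complex \<Rightarrow> complex \<Rightarrow> complex \<Rightarrow> complex \<Rightarrow> complex" where
  "qD x1 y1 x2 y2 = x1*x2 - y1*y2"

lemma bilinear_forms_not_all_zero:
  assumes "(x1, y1) \<noteq> (0::complex, 0)" "(x2, y2) \<noteq> (0::complex, 0)"
  shows "\<not> (qA x1 y1 x2 y2 = 0 \<and> qB x1 y1 x2 y2 = 0 \<and> qC x1 y1 x2 y2 = 0 \<and> qD x1 y1 x2 y2 = 0)"
proof
  assume h: "qA x1 y1 x2 y2 = 0 \<and> qB x1 y1 x2 y2 = 0 \<and> qC x1 y1 x2 y2 = 0 \<and> qD x1 y1 x2 y2 = 0"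
  have "2*(x1*x2) = qA x1 y1 x2 y2 + qD x1 y1 x2 y2" "2*(y1*y2) = qA x1 y1 x2 y2 - qD x1 y1 x2 y2"
    "2*(x1*y2) = qB x1 y1 x2 y2 + qC x1 y1 x2 y2" "2*(y1*x2) = qB x1 y1 x2 y2 - qC x1 y1 x2 y2"
    unfolding qA_def qB_def qC_def qD_def by (simp_all add: algebra_simps)
  then have "x1*x2 = 0" "y1*y2 = 0" "x1*y2 = 0" "y1*x2 = 0" using h by simp_all
  then show False using assms by auto
qed

definition forms_split :: "complex \<Rightarrow> complex \<Rightarrow> complex \<Rightarrow> complex \<Rightarrow> bool" where
  "forms_split A B C D \<longleftrightarrow> (A = 0 \<and> B = 0) \<or> (C = 0 \<and> D = 0)"

lemma signs_if_forms_split: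
  assumes "(x1, y1) \<noteq> (0::complex, 0)" "(x2, y2) \<noteq> (0::complex, 0)"
    and "forms_split (qA x1 y1 x2 y2) (qB x1 y1 x2 y2) (qC x1 y1 x2 y2) (qD x1 y1 x2 y2)"
  shows "(y1 = x1 \<or> y1 = -x1) \<and> (y2 = x2 \<or> y2 = -x2)"
proof -
  have "(x1+y1)*(x2+y2) = qA x1 y1 x2 y2 + qB x1 y1 x2 y2" "(x1-y1)*(x2-y2) = qA x1 y1 x2 y2 - qB x1 y1 x2 y2"
    "(x1-y1)*(x2+y2) = qC x1 y1 x2 y2 + qD x1 y1 x2 y2" "(x1+y1)*(x2-y2) = qD x1 y1 x2 y2 - qC x1 y1 x2 y2"
    unfolding qA_def qB_def qC_def qD_def by (simp_all add: algebra_simps)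
  then have "(x1+y1)*(x2+y2) = 0 \<and> (x1-y1)*(x2-y2) = 0 \<or> (x1-y1)*(x2+y2) = 0 \<and> (x1+y1)*(x2-y2) = 0"
    using assms(3) unfolding forms_split_def by auto
  then show ?thesis using assms(1,2) by (auto simp: add_eq_0_iff)
qed

lemma matrix_with_kernels_rank_one:
  fixes x1 y1 x2 y2 P R S1 S2 :: complex
  assumes "(x1, y1) \<noteq> (0, 0)" "(x2, y2) \<noteq> (0, 0)"
    and "P*x2 + S1*y2 = 0" "S2*x2 + R*y2 = 0" "P*x1 + S2*y1 = 0" "S1*x1 + R*y1 = 0"
  shows "\<exists>\<alpha>. P = \<alpha>*y1*y2 \<and> S1 = -\<alpha>*y1*x2 \<and> S2 = -\<alpha>*x1*y2 \<and> R = \<alpha>*x1*x2"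
proof -
  have n: "P*x2 = -(S1*y2)" "S2*x2 = -(R*y2)" "P*x1 = -(S2*y1)" "S1*x1 = -(R*y1)"
    using assms(3-6) by (simp_all add: eq_neg_iff_add_eq_0)
  consider "x1 = 0" "x2 = 0" | "x1 = 0" "x2 \<noteq> 0" | "x1 \<noteq> 0" "x2 = 0" | "x1 \<noteq> 0" "x2 \<noteq> 0" by blast
  then show ?thesis
  proof cases
    case 1
    with assms(1,2) n show ?thesis by (intro exI[of _ "P/(y1*y2)"]) (auto simp: field_simps)
  next
    case 2
    with assms(1) n show ?thesis by (intro exI[of _ "-S1/(y1*x2)"]) (auto simp: field_simps)
  next
    case 3
    with assms(2) n show ?thesis by (intro exI[of _ "-S2/(x1*y2)"]) (auto simp: field_simps)
  next
    case 4
    have "P*x1*x2 = -(S2*y1)*x2" using n(3) by simp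
    also have "\<dots> = -(S2*x2)*y1" by (simp add: algebra_simps)
    also have "\<dots> = R*y1*y2" using n(2) by simp
    finally have "P = R*y1*y2/(x1*x2)" using 4 by (simp add: field_simps)
    with 4 n show ?thesis by (intro exI[of _ "R/(x1*x2)"]) (auto simp: field_simps)
  qed
qed

text \<open>The vanishing of the four partial derivatives in the first two pairs says that the matrix of
  the bilinear form G(., ., p3, p4) in these pairs has both kernels nontrivial.\<close>

lemma sing_pair_relation:
  fixes x1 y1 x2 y2 x3 y3 x4 y4 a b c d :: complex
  assumes "(x1, y1) \<noteq> (0, 0)" "(x2, y2) \<noteq> (0, 0)"
    and "(a+d)/2*x2*x3*x4 + (a-d)/2*x2*y3*y4 + (b+c)/2*y2*x3*y4 + (b-c)/2*y2*y3*x4 = 0"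
    and "(a+d)/2*y2*y3*y4 + (a-d)/2*y2*x3*x4 + (b+c)/2*x2*y3*x4 + (b-c)/2*x2*x3*y4 = 0"
    and "(a+d)/2*x1*x3*x4 + (a-d)/2*x1*y3*y4 + (b+c)/2*y1*y3*x4 + (b-c)/2*y1*x3*y4 = 0"
    and "(a+d)/2*y1*y3*y4 + (a-d)/2*y1*x3*x4 + (b+c)/2*x1*x3*y4 + (b-c)/2*x1*y3*x4 = 0"
  shows "\<exists>\<alpha>. a * qA x3 y3 x4 y4 = \<alpha> * qA x1 y1 x2 y2 \<and> b * qB x3 y3 x4 y4 = -\<alpha> * qB x1 y1 x2 y2 \<and>
              c * qC x3 y3 x4 y4 = \<alpha> * qC x1 y1 x2 y2 \<and> d * qD x3 y3 x4 y4 = -\<alpha> * qD x1 y1 x2 y2"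
proof -
  define P where "P = a * qA x3 y3 x4 y4 + d * qD x3 y3 x4 y4"
  define R where "R = a * qA x3 y3 x4 y4 - d * qD x3 y3 x4 y4"
  define S1 where "S1 = b * qB x3 y3 x4 y4 + c * qC x3 y3 x4 y4"
  define S2 where "S2 = b * qB x3 y3 x4 y4 - c * qC x3 y3 x4 y4"
  have "P*x2 + S1*y2 = 2 * ((a+d)/2*x2*x3*x4 + (a-d)/2*x2*y3*y4 + (b+c)/2*y2*x3*y4 + (b-c)/2*y2*y3*x4)"
    "S2*x2 + R*y2 = 2 * ((a+d)/2*y2*y3*y4 + (a-d)/2*y2*x3*x4 + (b+c)/2*x2*y3*x4 + (b-c)/2*x2*x3*y4)"
    "P*x1 + S2*y1 = 2 * ((a+d)/2*x1*x3*x4 + (a-d)/2*x1*y3*y4 + (b+c)/2*y1*y3*x4 + (b-c)/2*y1*x3*y4)"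
    "S1*x1 + R*y1 = 2 * ((a+d)/2*y1*y3*y4 + (a-d)/2*y1*x3*x4 + (b+c)/2*x1*x3*y4 + (b-c)/2*x1*y3*x4)"
    unfolding P_def R_def S1_def S2_def qA_def qB_def qC_def qD_def by (simp_all add: field_simps)
  then have "P*x2 + S1*y2 = 0" "S2*x2 + R*y2 = 0" "P*x1 + S2*y1 = 0" "S1*x1 + R*y1 = 0"
    unfolding assms(3-6) by simp_all
  then obtain \<alpha> where \<alpha>: "P = \<alpha>*y1*y2" "S1 = -\<alpha>*y1*x2" "S2 = -\<alpha>*x1*y2" "R = \<alpha>*x1*x2"
    using matrix_with_kernels_rank_one[OF assms(1,2)] by blast
  have "a * qA x3 y3 x4 y4 = (P + R)/2" "d * qD x3 y3 x4 y4 = (P - R)/2"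
    "b * qB x3 y3 x4 y4 = (S1 + S2)/2" "c * qC x3 y3 x4 y4 = (S1 - S2)/2"
    unfolding P_def R_def S1_def S2_def by (simp_all add: field_simps)
  then show ?thesis unfolding \<alpha> qA_def qB_def qC_def qD_def
    by (intro exI[of _ "\<alpha>/2"]) (simp add: field_simps)
qed

lemma sing_point_relations:
  assumes "valid4 v" "\<forall>i<8. dG a b c d v i = 0"
  obtains \<alpha> \<beta> where
    "a * qA (v 4) (v 5) (v 6) (v 7) = \<alpha> * qA (v 0) (v 1) (v 2) (v 3)"
    "b * qB (v 4) (v 5) (v 6) (v 7) = -\<alpha> * qB (v 0) (v 1) (v 2) (v 3)"
    "c * qC (v 4) (v 5) (v 6) (v 7) = \<alpha> * qC (v 0) (v 1) (v 2) (v 3)"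
    "d * qD (v 4) (v 5) (v 6) (v 7) = -\<alpha> * qD (v 0) (v 1) (v 2) (v 3)"
    "a * qA (v 0) (v 1) (v 2) (v 3) = \<beta> * qA (v 4) (v 5) (v 6) (v 7)"
    "b * qB (v 0) (v 1) (v 2) (v 3) = -\<beta> * qB (v 4) (v 5) (v 6) (v 7)"
    "c * qC (v 0) (v 1) (v 2) (v 3) = \<beta> * qC (v 4) (v 5) (v 6) (v 7)"
    "d * qD (v 0) (v 1) (v 2) (v 3) = -\<beta> * qD (v 4) (v 5) (v 6) (v 7)"
proof -
  have pairs: "(v 0, v 1) \<noteq> (0, 0)" "(v 2, v 3) \<noteq> (0, 0)" "(v 4, v 5) \<noteq> (0, 0)" "(v 6, v 7) \<noteq> (0, 0)"
    using assms(1) unfolding valid4_def all_less_4 by simp_all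
  have d: "dG a b c d v 0 = 0" "dG a b c d v 1 = 0" "dG a b c d v 2 = 0" "dG a b c d v 3 = 0"
    "dG a b c d v 4 = 0" "dG a b c d v 5 = 0" "dG a b c d v 6 = 0" "dG a b c d v 7 = 0"
    using assms(2) unfolding all_less_8 by simp_all
  have "\<exists>\<alpha>. a * qA (v 4) (v 5) (v 6) (v 7) = \<alpha> * qA (v 0) (v 1) (v 2) (v 3) \<and>
      b * qB (v 4) (v 5) (v 6) (v 7) = -\<alpha> * qB (v 0) (v 1) (v 2) (v 3) \<and>
      c * qC (v 4) (v 5) (v 6) (v 7) = \<alpha> * qC (v 0) (v 1) (v 2) (v 3) \<and>
      d * qD (v 4) (v 5) (v 6) (v 7) = -\<alpha> * qD (v 0) (v 1) (v 2) (v 3)"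
    by (rule sing_pair_relation[OF pairs(1,2)]) (use d(1-4) in \<open>simp_all add: dG_def Let_def\<close>)
  moreover have "\<exists>\<beta>. a * qA (v 0) (v 1) (v 2) (v 3) = \<beta> * qA (v 4) (v 5) (v 6) (v 7) \<and>
      b * qB (v 0) (v 1) (v 2) (v 3) = -\<beta> * qB (v 4) (v 5) (v 6) (v 7) \<and>
      c * qC (v 0) (v 1) (v 2) (v 3) = \<beta> * qC (v 4) (v 5) (v 6) (v 7) \<and>
      d * qD (v 0) (v 1) (v 2) (v 3) = -\<beta> * qD (v 4) (v 5) (v 6) (v 7)"
    by (rule sing_pair_relation[OF pairs(3,4)]) (use d(5-8) in \<open>simp_all add: dG_def Let_def algebra_simps\<close>)
  ultimately show ?thesis using that by blast
qed

lemma sing_locus_subset_sign_grid: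
  assumes split: "\<And>\<alpha> \<beta> A B C D A' B' C' D'.
    a * A' = \<alpha> * A \<Longrightarrow> b * B' = -\<alpha> * B \<Longrightarrow> c * C' = \<alpha> * C \<Longrightarrow> d * D' = -\<alpha> * D \<Longrightarrow>
    a * A = \<beta> * A' \<Longrightarrow> b * B = -\<beta> * B' \<Longrightarrow> c * C = \<beta> * C' \<Longrightarrow> d * D = -\<beta> * D' \<Longrightarrow>
    \<not> (A = 0 \<and> B = 0 \<and> C = 0 \<and> D = 0) \<Longrightarrow> \<not> (A' = 0 \<and> B' = 0 \<and> C' = 0 \<and> D' = 0) \<Longrightarrow>
    forms_split A B C D \<and> forms_split A' B' C' D'"
  shows "sing_locus a b c d \<subseteq> sign_grid"
proof
  fix p assume "p \<in> sing_locus a b c d"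
  then obtain v where v: "valid4 v" "p = pt4 v" and dv: "\<forall>i<8. dG a b c d v i = 0"
    by (auto simp: sing_locus_iff)
  have pairs: "(v 0, v 1) \<noteq> (0, 0)" "(v 2, v 3) \<noteq> (0, 0)" "(v 4, v 5) \<noteq> (0, 0)" "(v 6, v 7) \<noteq> (0, 0)"
    using v(1) unfolding valid4_def all_less_4 by simp_all
  have "forms_split (qA (v 0) (v 1) (v 2) (v 3)) (qB (v 0) (v 1) (v 2) (v 3))
        (qC (v 0) (v 1) (v 2) (v 3)) (qD (v 0) (v 1) (v 2) (v 3))
      \<and> forms_split (qA (v 4) (v 5) (v 6) (v 7)) (qB (v 4) (v 5) (v 6) (v 7))
        (qC (v 4) (v 5) (v 6) (v 7)) (qD (v 4) (v 5) (v 6) (v 7))"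
    by (rule sing_point_relations[OF v(1) dv], rule split)
       (assumption | rule bilinear_forms_not_all_zero pairs)+
  then have "(v 1 = v 0 \<or> v 1 = - v 0) \<and> (v 3 = v 2 \<or> v 3 = - v 2)"
    "(v 5 = v 4 \<or> v 5 = - v 4) \<and> (v 7 = v 6 \<or> v 7 = - v 6)"
    using signs_if_forms_split[OF pairs(1,2)] signs_if_forms_split[OF pairs(3,4)] by blast+
  then show "p \<in> sign_grid" unfolding sign_grid_def all_less_4 using v by auto
qed

section \<open>The degenerate parameters\<close>

lemma zdim_ge_2_sing_locus_if_surface:
  assumes "admissible \<tau> {1, k}" "odd k" "k \<noteq> 1"
    and "\<And>w. \<forall>j<8. w j = w (\<tau> j) \<Longrightarrow> Gabcd a b c d w = 0 \<and> (\<forall>i<8. dG a b c d w i = 0)"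
  shows "zdim_ge (sing_locus a b c d) 2"
  using assms(4) by (intro zdim_ge_2_if_contains_coord_surface[OF assms(1-3)])
    (auto simp: coord_subspace_def intro!: pt4_in_sing_locusI)

text \<open>For instance, for a = b = c = 0 we have G = d/2 qD(1,2) qD(3,4), which is singular along the
  surface (x2:y2) = (y1:x1), (x4:y4) = (y3:x3); the other cases are analogous.\<close>

lemma sing_along_surfaces:
  shows "w 2 = w 1 \<Longrightarrow> w 3 = w 0 \<Longrightarrow> w 6 = w 5 \<Longrightarrow> w 7 = w 4 \<Longrightarrow>
      Gabcd 0 0 0 d w = 0 \<and> (\<forall>i<8. dG 0 0 0 d w i = 0)"
    and "w 2 = w 0 \<Longrightarrow> w 3 = w 1 \<Longrightarrow> w 6 = w 4 \<Longrightarrow> w 7 = w 5 \<Longrightarrow>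
      Gabcd 0 0 c 0 w = 0 \<and> (\<forall>i<8. dG 0 0 c 0 w i = 0)"
    and "w 4 = w 0 \<Longrightarrow> w 5 = w 1 \<Longrightarrow> w 6 = w 2 \<Longrightarrow> w 7 = w 3 \<Longrightarrow>
      Gabcd a (-a) a (-a) w = 0 \<and> (\<forall>i<8. dG a (-a) a (-a) w i = 0)"
    and "w 4 = w 3 \<Longrightarrow> w 5 = w 2 \<Longrightarrow> w 6 = w 1 \<Longrightarrow> w 7 = w 0 \<Longrightarrow>
      Gabcd a (-a) a a w = 0 \<and> (\<forall>i<8. dG a (-a) a a w i = 0)"
    and "w 4 = w 2 \<Longrightarrow> w 5 = w 3 \<Longrightarrow> w 6 = w 0 \<Longrightarrow> w 7 = w 1 \<Longrightarrow>
      Gabcd a (-a) (-a) (-a) w = 0 \<and> (\<forall>i<8. dG a (-a) (-a) (-a) w i = 0)"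
    and "w 4 = w 1 \<Longrightarrow> w 5 = w 0 \<Longrightarrow> w 6 = w 3 \<Longrightarrow> w 7 = w 2 \<Longrightarrow>
      Gabcd a (-a) (-a) a w = 0 \<and> (\<forall>i<8. dG a (-a) (-a) a w i = 0)"
  unfolding all_less_8 Gabcd_def dG_def Let_def by (simp_all add: algebra_simps)

lemma zdim_ge_2_sing_locus_ab0:
  assumes "c = 0 \<or> d = 0"
  shows "zdim_ge (sing_locus 0 0 c d) 2"
  using assms
proof
  assume "c = 0"
  then show ?thesis
    by (intro zdim_ge_2_sing_locus_if_surface[where k=5
          and \<tau>="\<lambda>j. if j = 2 then 1 else if j = 3 then 0 else if j = 6 then 5 else if j = 7 then 4 else j"])
       (simp_all add: sing_along_surfaces(1) admissible_def all_less_4 all_less_8)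
next
  assume "d = 0"
  then show ?thesis
    by (intro zdim_ge_2_sing_locus_if_surface[where k=5
          and \<tau>="\<lambda>j. if j = 2 then 0 else if j = 3 then 1 else if j = 6 then 4 else if j = 7 then 5 else j"])
       (simp_all add: sing_along_surfaces(2) admissible_def all_less_4 all_less_8)
qed

lemma zdim_ge_2_sing_locus_c_eq_pm_a:
  assumes "c = a \<or> c = -a" "d = c \<or> d = -c"
  shows "zdim_ge (sing_locus a (-a) c d) 2"
proof -
  consider "c = a" "d = -a" | "c = a" "d = a" | "c = -a" "d = -a" | "c = -a" "d = a"
    using assms by fastforce
  then show ?thesis
  proof cases
    case 1
    then show ?thesis
      by (intro zdim_ge_2_sing_locus_if_surface[where k=3
            and \<tau>="\<lambda>j. if j = 4 then 0 else if j = 5 then 1 else if j = 6 then 2 else if j = 7 then 3 else j"])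
         (simp_all add: sing_along_surfaces(3) admissible_def all_less_4 all_less_8)
  next
    case 2
    then show ?thesis
      by (intro zdim_ge_2_sing_locus_if_surface[where k=3
            and \<tau>="\<lambda>j. if j = 4 then 3 else if j = 5 then 2 else if j = 6 then 1 else if j = 7 then 0 else j"])
         (simp_all add: sing_along_surfaces(4) admissible_def all_less_4 all_less_8)
  next
    case 3
    then show ?thesis
      by (intro zdim_ge_2_sing_locus_if_surface[where k=3
            and \<tau>="\<lambda>j. if j = 4 then 2 else if j = 5 then 3 else if j = 6 then 0 else if j = 7 then 1 else j"])
         (simp_all add: sing_along_surfaces(5) admissible_def all_less_4 all_less_8)
  next
    case 4
    then show ?thesis
      by (intro zdim_ge_2_sing_locus_if_surface[where k=3
            and \<tau>="\<lambda>j. if j = 4 then 1 else if j = 5 then 0 else if j = 6 then 3 else if j = 7 then 2 else j"])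
         (simp_all add: sing_along_surfaces(6) admissible_def all_less_4 all_less_8)
  qed
qed

lemma sing_locus_subset_sign_grid_a0:
  assumes "c \<noteq> 0" "d \<noteq> 0"
  shows "sing_locus 0 0 c d \<subseteq> sign_grid"
proof (rule sing_locus_subset_sign_grid)
  fix \<alpha> \<beta> A B C D A' B' C' D' :: complex
  assume "c * C' = \<alpha> * C" "d * D' = -\<alpha> * D" "c * C = \<beta> * C'" "d * D = -\<beta> * D'"
    "0 * A' = \<alpha> * A" "0 * B' = -\<alpha> * B" "0 * A = \<beta> * A'" "0 * B = -\<beta> * B'"
    "\<not> (A = 0 \<and> B = 0 \<and> C = 0 \<and> D = 0)" "\<not> (A' = 0 \<and> B' = 0 \<and> C' = 0 \<and> D' = 0)"
  then show "forms_split A B C D \<and> forms_split A' B' C' D'"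
    using assms by (cases "\<alpha> = 0"; cases "\<beta> = 0") (auto simp: forms_split_def)
qed

lemma sing_locus_subset_sign_grid_cd0:
  assumes "a \<noteq> 0"
  shows "sing_locus a (-a) 0 0 \<subseteq> sign_grid"
proof (rule sing_locus_subset_sign_grid)
  fix \<alpha> \<beta> A B C D A' B' C' D' :: complex
  assume "a * A' = \<alpha> * A" "-a * B' = -\<alpha> * B" "a * A = \<beta> * A'" "-a * B = -\<beta> * B'"
    "0 * C' = \<alpha> * C" "0 * D' = -\<alpha> * D" "0 * C = \<beta> * C'" "0 * D = -\<beta> * D'"
    "\<not> (A = 0 \<and> B = 0 \<and> C = 0 \<and> D = 0)" "\<not> (A' = 0 \<and> B' = 0 \<and> C' = 0 \<and> D' = 0)"
  then show "forms_split A B C D \<and> forms_split A' B' C' D'"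
    using assms by (cases "\<alpha> = 0"; cases "\<beta> = 0") (auto simp: forms_split_def)
qed

text \<open>Composing the two relations gives a^2 A = \<alpha> \<beta> A, a^2 B = \<alpha> \<beta> B and c^2 C = \<alpha> \<beta> C,
  c^2 D = \<alpha> \<beta> D; as a^2 \<noteq> c^2, either A = B = 0 or C = D = 0.\<close>

lemma sing_locus_subset_sign_grid_generic:
  assumes "a \<noteq> 0" "c \<noteq> 0" "d * d = c * c" "c * c \<noteq> a * a"
  shows "sing_locus a (-a) c d \<subseteq> sign_grid"
proof (rule sing_locus_subset_sign_grid)
  fix \<alpha> \<beta> A B C D A' B' C' D' :: complex
  assume h: "a * A' = \<alpha> * A" "-a * B' = -\<alpha> * B" "c * C' = \<alpha> * C" "d * D' = -\<alpha> * D"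
    "a * A = \<beta> * A'" "-a * B = -\<beta> * B'" "c * C = \<beta> * C'" "d * D = -\<beta> * D'"
  have "d \<noteq> 0" using assms(2,3) by auto
  have "(a*a) * A = (\<alpha>*\<beta>) * A" "(a*a) * B = (\<alpha>*\<beta>) * B" "(c*c) * C = (\<alpha>*\<beta>) * C" "(c*c) * D = (\<alpha>*\<beta>) * D"
    using h assms(3) by (metis mult.assoc mult.commute mult_minus_left minus_mult_minus)+
  then show "forms_split A B C D \<and> forms_split A' B' C' D'"
    using h assms(1,2,4) \<open>d \<noteq> 0\<close> by (cases "\<alpha> * \<beta> = a * a") (auto simp: forms_split_def)
qed

definition vec8 :: "complex \<Rightarrow> complex \<Rightarrow> complex \<Rightarrow> complex \<Rightarrow> complex \<Rightarrow> complex \<Rightarrow> complex \<Rightarrow> complex \<Rightarrow> nat \<Rightarrow> complex" where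
  "vec8 a0 a1 a2 a3 a4 a5 a6 a7 i = (if i = 0 then a0 else if i = 1 then a1 else if i = 2 then a2
     else if i = 3 then a3 else if i = 4 then a4 else if i = 5 then a5 else if i = 6 then a6
     else if i = 7 then a7 else 0)"

lemma valid4_vec8:
  "(a0, a1) \<noteq> (0, 0) \<Longrightarrow> (a2, a3) \<noteq> (0, 0) \<Longrightarrow> (a4, a5) \<noteq> (0, 0) \<Longrightarrow> (a6, a7) \<noteq> (0, 0)
   \<Longrightarrow> valid4 (vec8 a0 a1 a2 a3 a4 a5 a6 a7)"
  unfolding valid4_def all_less_4 by (simp add: vec8_def)

lemma card_ne_2_not_curve_if_subset_sign_grid:
  assumes "b = -a" "sing_locus a b c d \<subseteq> sign_grid"
    and w: "valid4 w" "Gabcd a b c d w = 0" "\<forall>i<8. dG a b c d w i = 0"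
    and "pt4 w \<noteq> pt4 (vec8 1 1 1 1 1 1 1 1)" "pt4 w \<noteq> pt4 (vec8 1 (-1) 1 (-1) 1 (-1) 1 (-1))"
  shows "card (sing_locus a b c d) \<noteq> 2 \<and> \<not> is_curve (sing_locus a b c d)"
proof
  have "pt4 (vec8 1 1 1 1 1 1 1 1) \<in> sing_locus a b c d"
    by (rule pt4_in_sing_locusI)
       (simp_all add: assms(1) valid4_def all_less_4 all_less_8 Gabcd_def dG_def Let_def vec8_def field_simps)
  moreover have "pt4 (vec8 1 (-1) 1 (-1) 1 (-1) 1 (-1)) \<in> sing_locus a b c d"
    by (rule pt4_in_sing_locusI)
       (simp_all add: assms(1) valid4_def all_less_4 all_less_8 Gabcd_def dG_def Let_def vec8_def field_simps)
  moreover have "pt4 (vec8 1 1 1 1 1 1 1 1) \<noteq> pt4 (vec8 1 (-1) 1 (-1) 1 (-1) 1 (-1))"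
    by (rule pt4_neqI[where k=0]) (auto intro: valid4_vec8 simp: vec8_def)
  ultimately show "card (sing_locus a b c d) \<noteq> 2"
    using card_ne_2_if_three_points pt4_in_sing_locusI[OF w] assms(6,7) by metis
  show "\<not> is_curve (sing_locus a b c d)"
    using not_zdim_ge_1_if_subset_sign_grid[OF assms(2)] unfolding is_curve_def by blast
qed

lemma card_ne_2_not_curve_if_ab0:
  assumes "a = 0" "b = 0"
  shows "card (sing_locus a b c d) \<noteq> 2 \<and> \<not> is_curve (sing_locus a b c d)"
proof (cases "c = 0 \<or> d = 0")
  case True
  then have "zdim_ge (sing_locus a b c d) 2" using assms zdim_ge_2_sing_locus_ab0 by simp
  then show ?thesis using card_ne_2_if_zdim_ge_2 unfolding is_curve_def by blast
next
  case False
  then show ?thesis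
    using assms sing_locus_subset_sign_grid_a0[of c d]
    by (intro card_ne_2_not_curve_if_subset_sign_grid[where w="vec8 1 1 1 1 1 (-1) 1 (-1)"]
          valid4_vec8 pt4_neqI[where k=0] pt4_neqI[where k=2])
       (unfold all_less_8, auto simp: Gabcd_def dG_def Let_def vec8_def field_simps)
qed

lemma card_ne_2_not_curve_if_d_eq_pm_c:
  assumes "b = -a" "a \<noteq> 0" "d = c \<or> d = -c"
  shows "card (sing_locus a b c d) \<noteq> 2 \<and> \<not> is_curve (sing_locus a b c d)"
proof (cases "c \<noteq> 0 \<and> (c = a \<or> c = -a)")
  case True
  then have "zdim_ge (sing_locus a b c d) 2" using assms zdim_ge_2_sing_locus_c_eq_pm_a by simp
  then show ?thesis using card_ne_2_if_zdim_ge_2 unfolding is_curve_def by blast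
next
  case False
  have "sing_locus a b c d \<subseteq> sign_grid"
  proof (cases "c = 0")
    case True
    then show ?thesis using assms sing_locus_subset_sign_grid_cd0[OF assms(2)] by auto
  next
    case False
    then have "c * c \<noteq> a * a" using \<open>\<not> (c \<noteq> 0 \<and> (c = a \<or> c = -a))\<close> by (metis square_eq_iff)
    then show ?thesis using assms False sing_locus_subset_sign_grid_generic[of a c d] by auto
  qed
  show ?thesis
    using assms(3)
  proof
    assume "d = c"
    then show ?thesis
      using assms(1) \<open>sing_locus a b c d \<subseteq> sign_grid\<close>
      by (intro card_ne_2_not_curve_if_subset_sign_grid[where w="vec8 1 (-1) 1 1 1 1 1 (-1)"]
            valid4_vec8 pt4_neqI[where k=0] pt4_neqI[where k=1])
         (unfold all_less_8, auto simp: Gabcd_def dG_def Let_def vec8_def field_simps)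
  next
    assume "d = -c"
    then show ?thesis
      using assms(1) \<open>sing_locus a b c d \<subseteq> sign_grid\<close>
      by (intro card_ne_2_not_curve_if_subset_sign_grid[where w="vec8 1 (-1) 1 1 1 (-1) 1 1"]
            valid4_vec8 pt4_neqI[where k=0] pt4_neqI[where k=1])
         (unfold all_less_8, auto simp: Gabcd_def dG_def Let_def vec8_def field_simps)
  qed
qed

section \<open>The lines for nondegenerate parameters\<close>

lemma D_identities:
  fixes c0 c1 c2 c3 :: complex
  defines "x \<equiv> 2 * (c0*c3 - c1*c2)" and "y \<equiv> c0^2 - c1^2 - c2^2 + c3^2"
    and "z \<equiv> 2 * (c0*c1 - c2*c3)" and "t \<equiv> c0^2 + c1^2 - c2^2 - c3^2"
  shows "D12 c0 c1 c2 c3 = t^2 - z^2" "D13 c0 c1 c2 c3 = x^2 + t^2" "4 * D14 c0 c1 c2 c3 = t^2 - y^2"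
  unfolding D12_def D13_def D14_def x_def y_def z_def t_def by algebra+

lemma line_parameters_with_c2_zero:
  fixes X Y Z T :: complex
  assumes "Y + T \<noteq> 0" "X^2 - Z^2 = Y^2 - T^2"
  obtains c0 c1 c3 where "c0 \<noteq> 0" "2 * (c0 * c3) = X" "c0^2 - c1^2 + c3^2 = Y" "2 * (c0 * c1) = Z"
    "c0^2 + c1^2 - c3^2 = T"
proof -
  define c0 where "c0 = csqrt ((Y + T) / 2)"
  have c0: "c0^2 = (Y + T) / 2" "c0 \<noteq> 0" using assms(1) by (auto simp: c0_def)
  define c1 where "c1 = Z / (2 * c0)"
  define c3 where "c3 = X / (2 * c0)"
  have "(2 * c0)^2 = 2 * (Y + T)" unfolding power_mult_distrib c0(1) by simp
  then have sq: "c1^2 = Z^2 / (2 * (Y + T))" "c3^2 = X^2 / (2 * (Y + T))"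
    by (simp_all add: c1_def c3_def power_divide)
  have "2 * (Y + T) \<noteq> 0" using assms(1) by (metis mult_eq_0_iff zero_neq_numeral)
  then have q: "(Y^2 - T^2) / (2 * (Y + T)) = (Y - T) / 2"
    by (simp add: divide_simps) (simp add: power2_eq_square algebra_simps)
  have "c0^2 - c1^2 + c3^2 = (Y + T) / 2 + (X^2 - Z^2) / (2 * (Y + T))"
    unfolding c0(1) sq by (simp add: diff_divide_distrib algebra_simps)
  also have "\<dots> = Y" unfolding assms(2) q by (simp add: field_simps)
  finally have y: "c0^2 - c1^2 + c3^2 = Y" .
  have "c0^2 + c1^2 - c3^2 = (Y + T) / 2 - (X^2 - Z^2) / (2 * (Y + T))"
    unfolding c0(1) sq by (simp add: diff_divide_distrib algebra_simps)
  also have "\<dots> = T" unfolding assms(2) q by (simp add: field_simps)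
  finally have t: "c0^2 + c1^2 - c3^2 = T" .
  show ?thesis by (rule that[OF c0(2) _ y _ t]) (use c0(2) in \<open>simp_all add: c1_def c3_def\<close>)
qed

lemma line_parameters_if_nondegenerate:
  assumes "b = -a" "a \<noteq> 0" "c + d \<noteq> 0" "c \<noteq> d"
  shows "\<exists>c0 c1 c2 c3 :: complex. (c0, c1, c2, c3) \<noteq> (0, 0, 0, 0) \<and> c0^2 \<noteq> c2^2 \<and>
           D12 c0 c1 c2 c3 * D13 c0 c1 c2 c3 * D14 c0 c1 c2 c3 \<noteq> 0 \<and>
           (let x = 2 * (c0*c3 - c1*c2);
                y = c0^2 - c1^2 - c2^2 + c3^2;
                z = 2 * (c0*c1 - c2*c3);
                t = c0^2 + c1^2 - c2^2 - c3^2
            in \<exists>r::complex. r \<noteq> 0 \<and>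
                 a = r * (x^2 - y^2) \<and> b = r * (t^2 - z^2) \<and>
                 c = r * (z^2 + t^2) \<and> d = r * (x^2 + y^2))"
proof -
  obtain X Y Z T :: complex where XYZT: "X^2 = (a+d)/2" "Y^2 = (d-a)/2" "Z^2 = (c+a)/2" "T^2 = (c-a)/2"
    by (meson power2_csqrt)
  have "Y + T \<noteq> 0"
  proof
    assume "Y + T = 0"
    then have "Y^2 = T^2" by (simp add: eq_neg_iff_add_eq_0[symmetric])
    then show False using XYZT(2,4) assms(4) by (simp add: field_simps)
  qed
  moreover have "X^2 - Z^2 = Y^2 - T^2" unfolding XYZT by (simp add: field_simps)
  ultimately obtain c0 c1 c3 where c: "c0 \<noteq> 0" "2 * (c0 * c3) = X" "c0^2 - c1^2 + c3^2 = Y"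
    "2 * (c0 * c1) = Z" "c0^2 + c1^2 - c3^2 = T"
    by (rule line_parameters_with_c2_zero)
  have xyzt: "2 * (c0*c3 - c1*0) = X" "c0^2 - c1^2 - 0^2 + c3^2 = Y" "2 * (c0*c1 - 0*c3) = Z"
    "c0^2 + c1^2 - 0^2 - c3^2 = T"
    using c by simp_all
  have D: "D12 c0 c1 0 c3 = T^2 - Z^2" "D13 c0 c1 0 c3 = X^2 + T^2" "4 * D14 c0 c1 0 c3 = T^2 - Y^2"
    using D_identities[of c0 c1 0 c3] unfolding xyzt by simp_all
  have "D12 c0 c1 0 c3 = -a" "D13 c0 c1 0 c3 = (c+d)/2" "4 * D14 c0 c1 0 c3 = (c-d)/2"
    unfolding D XYZT by (simp_all add: field_simps)
  then have "D12 c0 c1 0 c3 * D13 c0 c1 0 c3 * D14 c0 c1 0 c3 \<noteq> 0"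
    using assms(2-4) by auto
  moreover have "let x = 2 * (c0*c3 - c1*0); y = c0^2 - c1^2 - 0^2 + c3^2;
        z = 2 * (c0*c1 - 0*c3); t = c0^2 + c1^2 - 0^2 - c3^2
      in \<exists>r::complex. r \<noteq> 0 \<and> a = r * (x^2 - y^2) \<and> b = r * (t^2 - z^2) \<and>
        c = r * (z^2 + t^2) \<and> d = r * (x^2 + y^2)"
    unfolding Let_def xyzt XYZT using assms(1) by (intro exI[of _ 1]) (simp add: field_simps)
  ultimately show ?thesis
    using c(1) by (intro exI[of _ c0] exI[of _ c1] exI[of _ 0] exI[of _ c3] conjI) simp_all
qed

theorem mainTheorem20:
  fixes a b c d :: complex
  assumes nz: "(a, b, c, d) \<noteq> (0, 0, 0, 0)"
    and ab: "a + b = 0"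
    and sing: "card (sing_locus a b c d) = 2 \<or> is_curve (sing_locus a b c d)"
  shows "\<exists>c0 c1 c2 c3 :: complex. (c0, c1, c2, c3) \<noteq> (0, 0, 0, 0) \<and> c0^2 \<noteq> c2^2 \<and>
           D12 c0 c1 c2 c3 * D13 c0 c1 c2 c3 * D14 c0 c1 c2 c3 \<noteq> 0 \<and>
           (let x = 2 * (c0*c3 - c1*c2);
                y = c0^2 - c1^2 - c2^2 + c3^2;
                z = 2 * (c0*c1 - c2*c3);
                t = c0^2 + c1^2 - c2^2 - c3^2
            in \<exists>r::complex. r \<noteq> 0 \<and>
                 a = r * (x^2 - y^2) \<and> b = r * (t^2 - z^2) \<and>
                 c = r * (z^2 + t^2) \<and> d = r * (x^2 + y^2))"
proof -
  have b: "b = -a" using ab by (simp add: eq_neg_iff_add_eq_0 add.commute)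
  show ?thesis
  proof (cases "a \<noteq> 0 \<and> c + d \<noteq> 0 \<and> c \<noteq> d")
    case True
    then show ?thesis using line_parameters_if_nondegenerate[OF b] by blast
  next
    case False
    then have "card (sing_locus a b c d) \<noteq> 2 \<and> \<not> is_curve (sing_locus a b c d)"
      using b card_ne_2_not_curve_if_ab0 card_ne_2_not_curve_if_d_eq_pm_c[OF b]
      by (metis add_eq_0_iff neg_equal_0_iff_equal)
    with sing show ?thesis by blast
  qed
qed

end
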